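(* Let $1/n\ll\nu\ll\tau\ll\alpha\ll 1$, and let $G$ be a digraph on $n$ vertices such that $e(G)\geq(\alpha-\nu)n^2$ and $\Delta^0(G)\leq\alpha n$. If $G$ is not a robust $(\nu,\tau)$-outexpander, then $G$ admits a $(4,\tau,4\nu)$-partition.
   Context: Hierarchy convention: $x\ll y$ means $x\leq f(y)$ for some implicitly given non-decreasing function $f:(0,1]\to(0,1]$; the statement asserts such functions exist, constants chosen from right to left. $\Delta^0(G)$ is the maximum over all vertices of the maximum of in- and outdegree. For $S\subseteq V(G)$, the robust $\nu$-outneighbourhood is $RN^+_\nu(S)=\{v\in V(G):|N^-(v)\cap S|\geq\nu n\}$; $G$ is a robust $(\nu,\tau)$-outexpander if $|RN^+_\nu(S)|\geq|S|+\nu n$ for all $S\subseteq V(G)$ with $\tau n\leq|S|\leq(1-\tau)n$. A $4$-partition is a family $\{V_{ij}:i,j\in[2]\}$ of pairwise disjoint (possibly empty) sets with union $V(G)$; $V_{i*}=V_{i1}\cup V_{i2}$, $V_{*j}=V_{1j}\cup V_{2j}$. With $E(A,B)$ the set of edges $ab$, $a\in A$, $b\in B$, the bad edges are $E(V_{1*},V_{*2})\cup E(V_{2*},V_{*1})$. A $(4,\tau,\gamma)$-partition is a $4$-partition with at most $\gamma n^2$ bad edges and $|V_{i*}|,|V_{*j}|\geq\tau n$ for all $i,j\in[2]$. *)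

theory Defs
  imports Complex_Main
begin

definition digraph :: "'a set \<Rightarrow> ('a \<times> 'a) set \<Rightarrow> bool" where
  "digraph V E \<longleftrightarrow> finite V \<and> E \<subseteq> V \<times> V \<and> (\<forall>v. (v, v) \<notin> E)"

definition outdeg :: "('a \<times> 'a) set \<Rightarrow> 'a \<Rightarrow> nat" where
  "outdeg E v = card {w. (v, w) \<in> E}"

definition indeg :: "('a \<times> 'a) set \<Rightarrow> 'a \<Rightarrow> nat" where
  "indeg E v = card {u. (u, v) \<in> E}"

definition max_semideg :: "'a set \<Rightarrow> ('a \<times> 'a) set \<Rightarrow> nat" where
  "max_semideg V E = Max (insert 0 ((\<lambda>v. max (indeg E v) (outdeg E v)) ` V))"

definition robust_outnbhd :: "'a set \<Rightarrow> ('a \<times> 'a) set \<Rightarrow> real \<Rightarrow> 'a set \<Rightarrow> 'a set" where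
  "robust_outnbhd V E \<nu> S = {v \<in> V. real (card ({u. (u, v) \<in> E} \<inter> S)) \<ge> \<nu> * real (card V)}"

definition robust_outexpander :: "'a set \<Rightarrow> ('a \<times> 'a) set \<Rightarrow> real \<Rightarrow> real \<Rightarrow> bool" where
  "robust_outexpander V E \<nu> \<tau> \<longleftrightarrow>
     (\<forall>S \<subseteq> V. \<tau> * real (card V) \<le> real (card S) \<and> real (card S) \<le> (1 - \<tau>) * real (card V)
        \<longrightarrow> real (card (robust_outnbhd V E \<nu> S)) \<ge> real (card S) + \<nu> * real (card V))"

definition four_partition :: "'a set \<Rightarrow> (nat \<Rightarrow> nat \<Rightarrow> 'a set) \<Rightarrow> bool" where
  "four_partition V P \<longleftrightarrow>
     (\<forall>i\<in>{1,2}. \<forall>j\<in>{1,2}. \<forall>i'\<in>{1,2}. \<forall>j'\<in>{1,2}. (i, j) \<noteq> (i', j') \<longrightarrow> P i j \<inter> P i' j' = {})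
     \<and> (\<Union>i\<in>{1,2}. \<Union>j\<in>{1,2}. P i j) = V"

definition row :: "(nat \<Rightarrow> nat \<Rightarrow> 'a set) \<Rightarrow> nat \<Rightarrow> 'a set" where
  "row P i = P i 1 \<union> P i 2"

definition col :: "(nat \<Rightarrow> nat \<Rightarrow> 'a set) \<Rightarrow> nat \<Rightarrow> 'a set" where
  "col P j = P 1 j \<union> P 2 j"

definition edges_between :: "('a \<times> 'a) set \<Rightarrow> 'a set \<Rightarrow> 'a set \<Rightarrow> ('a \<times> 'a) set" where
  "edges_between E A B = {(a, b) \<in> E. a \<in> A \<and> b \<in> B}"

definition bad_edges :: "('a \<times> 'a) set \<Rightarrow> (nat \<Rightarrow> nat \<Rightarrow> 'a set) \<Rightarrow> ('a \<times> 'a) set" where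
  "bad_edges E P = edges_between E (row P 1) (col P 2) \<union> edges_between E (row P 2) (col P 1)"

definition four_tau_gamma_partition ::
  "'a set \<Rightarrow> ('a \<times> 'a) set \<Rightarrow> real \<Rightarrow> real \<Rightarrow> (nat \<Rightarrow> nat \<Rightarrow> 'a set) \<Rightarrow> bool" where
  "four_tau_gamma_partition V E \<tau> \<gamma> P \<longleftrightarrow>
     four_partition V P
     \<and> real (card (bad_edges E P)) \<le> \<gamma> * real (card V) ^ 2
     \<and> (\<forall>i\<in>{1,2}. real (card (row P i)) \<ge> \<tau> * real (card V)
                 \<and> real (card (col P i)) \<ge> \<tau> * real (card V))"

definition hier_fun :: "(real \<Rightarrow> real) \<Rightarrow> bool" where
  "hier_fun f \<longleftrightarrow> (\<forall>x\<in>{0<..1}. f x \<in> {0<..1}) \<and> mono_on {0<..1} f"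

end

theory Submission
  imports Defs
begin

text \<open>
  Let S witness that G is not a robust outexpander, and let R be its robust outneighbourhood,
  so |R| < |S| + \<nu>n. Choose C with |C| = |S| that contains R or is contained in R. Every
  vertex outside R receives fewer than \<nu>n edges from S, and at most \<nu>n vertices of R lie
  outside C, so e(S, V \ C) \<le> \<nu>n(n + \<Delta>^0). Since G is almost \<alpha>n-regular on both sides,
  counting out-edges of V \ S and in-edges of C shows e(V \ S, C) \<le> e(S, V \ C) + \<nu>n^2.
  Hence {S, V \ S} \<times> {C, V \ C} has at most 2\<nu>n(n + \<Delta>^0) + \<nu>n^2 \<le> 4\<nu>n^2 bad edges
  as soon as \<alpha> \<le> 1/2; this is all the hierarchy is needed for, so identity functions suffice.
\<close>

lemma indeg_le_max_semideg:
  assumes "finite V" "v \<in> V"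
  shows "indeg E v \<le> max_semideg V E"
proof -
  have "max (indeg E v) (outdeg E v) \<le> max_semideg V E"
    unfolding max_semideg_def using assms by (intro Max_ge) auto
  then show ?thesis by simp
qed

lemma outdeg_le_max_semideg:
  assumes "finite V" "v \<in> V"
  shows "outdeg E v \<le> max_semideg V E"
proof -
  have "max (indeg E v) (outdeg E v) \<le> max_semideg V E"
    unfolding max_semideg_def using assms by (intro Max_ge) auto
  then show ?thesis by simp
qed

lemma digraph_finite_edges: "digraph V E \<Longrightarrow> finite E"
  unfolding digraph_def by (meson finite_SigmaI finite_subset)

lemma finite_out_nbhd: "finite E \<Longrightarrow> finite {w. (a, w) \<in> E}"
  using finite_Image[of E "{a}"] by (simp add: Image_singleton)

lemma finite_in_nbhd: "finite E \<Longrightarrow> finite {u. (u, b) \<in> E}"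
  using finite_Image[of "E\<inverse>" "{b}"] by (simp add: Image_singleton)

lemma finite_edges_between: "finite E \<Longrightarrow> finite (edges_between E A B)"
  by (rule finite_subset[of _ E]) (auto simp: edges_between_def)

lemma card_out_nbhd_Int_le_max_semideg:
  assumes "digraph V E" "v \<in> V"
  shows "card ({w. (v, w) \<in> E} \<inter> B) \<le> max_semideg V E"
proof -
  have "card ({w. (v, w) \<in> E} \<inter> B) \<le> outdeg E v"
    unfolding outdeg_def using digraph_finite_edges[OF assms(1)] by (intro card_mono finite_out_nbhd) auto
  also have "\<dots> \<le> max_semideg V E"
    using assms by (intro outdeg_le_max_semideg) (auto simp: digraph_def)
  finally show ?thesis .
qed

lemma card_in_nbhd_Int_le_max_semideg:
  assumes "digraph V E" "v \<in> V"
  shows "card ({u. (u, v) \<in> E} \<inter> A) \<le> max_semideg V E"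
proof -
  have "card ({u. (u, v) \<in> E} \<inter> A) \<le> indeg E v"
    unfolding indeg_def using digraph_finite_edges[OF assms(1)] by (intro card_mono finite_in_nbhd) auto
  also have "\<dots> \<le> max_semideg V E"
    using assms by (intro indeg_le_max_semideg) (auto simp: digraph_def)
  finally show ?thesis .
qed

lemma card_edges_between_sum_out:
  assumes "finite E" "finite A"
  shows "card (edges_between E A B) = (\<Sum>a\<in>A. card ({w. (a, w) \<in> E} \<inter> B))"
proof -
  have "edges_between E A B = (SIGMA a:A. {w. (a, w) \<in> E} \<inter> B)"
    unfolding edges_between_def by auto
  then show ?thesis using assms by (simp add: finite_out_nbhd)
qed

lemma card_edges_between_sum_in:
  assumes "finite E" "finite B"
  shows "card (edges_between E A B) = (\<Sum>b\<in>B. card ({u. (u, b) \<in> E} \<inter> A))"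
proof -
  have "edges_between E A B = prod.swap ` (SIGMA b:B. {u. (u, b) \<in> E} \<inter> A)"
    unfolding edges_between_def by force
  then show ?thesis using assms by (simp add: card_image finite_in_nbhd)
qed

lemma card_edges_between_le_source:
  assumes "digraph V E" "A \<subseteq> V"
  shows "card (edges_between E A B) \<le> card A * max_semideg V E"
proof -
  have fin: "finite E" "finite A"
    using assms digraph_finite_edges finite_subset unfolding digraph_def by blast+
  have "card (edges_between E A B) = (\<Sum>a\<in>A. card ({w. (a, w) \<in> E} \<inter> B))"
    by (rule card_edges_between_sum_out[OF fin])
  also have "\<dots> \<le> (\<Sum>a\<in>A. max_semideg V E)"
    using assms by (intro sum_mono card_out_nbhd_Int_le_max_semideg) auto
  finally show ?thesis by simp
qed

lemma card_edges_between_le_target: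
  assumes "digraph V E" "B \<subseteq> V"
  shows "card (edges_between E A B) \<le> card B * max_semideg V E"
proof -
  have fin: "finite E" "finite B"
    using assms digraph_finite_edges finite_subset unfolding digraph_def by blast+
  have "card (edges_between E A B) = (\<Sum>b\<in>B. card ({u. (u, b) \<in> E} \<inter> A))"
    by (rule card_edges_between_sum_in[OF fin])
  also have "\<dots> \<le> (\<Sum>b\<in>B. max_semideg V E)"
    using assms by (intro sum_mono card_in_nbhd_Int_le_max_semideg) auto
  finally show ?thesis by simp
qed

lemma card_edges_between_Diff_source:
  assumes "finite E" "C \<subseteq> A"
  shows "card (edges_between E A B) = card (edges_between E C B) + card (edges_between E (A - C) B)"
proof -
  have "edges_between E A B = edges_between E C B \<union> edges_between E (A - C) B"
    using assms(2) unfolding edges_between_def by auto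
  moreover have "edges_between E C B \<inter> edges_between E (A - C) B = {}"
    unfolding edges_between_def by auto
  ultimately show ?thesis
    using finite_edges_between[OF assms(1)] by (simp add: card_Un_disjoint)
qed

lemma card_edges_between_Diff_target:
  assumes "finite E" "C \<subseteq> B"
  shows "card (edges_between E A B) = card (edges_between E A C) + card (edges_between E A (B - C))"
proof -
  have "edges_between E A B = edges_between E A C \<union> edges_between E A (B - C)"
    using assms(2) unfolding edges_between_def by auto
  moreover have "edges_between E A C \<inter> edges_between E A (B - C) = {}"
    unfolding edges_between_def by auto
  ultimately show ?thesis
    using finite_edges_between[OF assms(1)] by (simp add: card_Un_disjoint)
qed

lemma obtain_subset_card_nearest:
  assumes "finite V" "R \<subseteq> V" "s \<le> card V"
  obtains C where "C \<subseteq> V" "card C = s" "card (R - C) = card R - s"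
proof (cases "card R \<le> s")
  case True
  have "s - card R \<le> card (V - R)"
    using assms by (simp add: card_Diff_subset finite_subset)
  then obtain X where X: "X \<subseteq> V - R" "card X = s - card R"
    by (meson obtain_subset_with_card_n)
  have "card (R \<union> X) = s"
    using X True assms by (subst card_Un_disjoint) (auto intro: finite_subset)
  moreover have "card (R - (R \<union> X)) = card R - s"
    using True by (metis Diff_eq_empty_iff card.empty diff_is_0_eq sup_ge1)
  moreover have "R \<union> X \<subseteq> V"
    using X assms by auto
  ultimately show ?thesis
    by (rule that[rotated])
next
  case False
  then obtain C where "C \<subseteq> R" "card C = s"
    by (meson nat_le_linear obtain_subset_with_card_n)
  then show ?thesis
    using that[of C] assms by (auto simp: card_Diff_subset finite_subset)
qed

lemma card_edges_between_complement_le: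
  assumes G: "digraph V E" and "S \<subseteq> V" "C \<subseteq> V" "0 \<le> \<nu>"
  defines "R \<equiv> robust_outnbhd V E \<nu> S"
  shows "real (card (edges_between E S (V - C)))
           \<le> \<nu> * real (card V) * real (card V) + real (card (R - C)) * real (max_semideg V E)"
proof -
  define d where "d v = real (card ({u. (u, v) \<in> E} \<inter> S))" for v
  have fin: "finite V" "finite E"
    using G digraph_finite_edges unfolding digraph_def by blast+
  have RV: "R \<subseteq> V"
    unfolding R_def robust_outnbhd_def by auto
  have "real (card (edges_between E S (V - C))) = (\<Sum>v\<in>V - C. d v)"
    unfolding d_def using fin by (simp add: card_edges_between_sum_in)
  also have "\<dots> = (\<Sum>v\<in>V - C - R. d v) + (\<Sum>v\<in>R - C. d v)"
  proof -
    have "R - C \<subseteq> V - C" "V - C - (R - C) = V - C - R"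
      using RV by blast+
    then show ?thesis
      using sum.subset_diff[of "R - C" "V - C" d] fin(1) by simp
  qed
  also have "\<dots> \<le> (\<Sum>v\<in>V - C - R. \<nu> * real (card V)) + (\<Sum>v\<in>R - C. real (max_semideg V E))"
  proof (intro add_mono sum_mono)
    show "d v \<le> \<nu> * real (card V)" if "v \<in> V - C - R" for v
      using that unfolding d_def R_def robust_outnbhd_def by auto
    show "d v \<le> real (max_semideg V E)" if "v \<in> R - C" for v
      using that RV card_in_nbhd_Int_le_max_semideg[OF G] unfolding d_def by auto
  qed
  also have "\<dots> \<le> \<nu> * real (card V) * real (card V) + real (card (R - C)) * real (max_semideg V E)"
  proof -
    have "card (V - C - R) \<le> card V"
      using fin(1) by (intro card_mono) auto
    then have "real (card (V - C - R)) * (\<nu> * real (card V)) \<le> real (card V) * (\<nu> * real (card V))"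
      using \<open>0 \<le> \<nu>\<close> by (intro mult_right_mono) auto
    then show ?thesis
      by (simp add: algebra_simps)
  qed
  finally show ?thesis .
qed

lemma card_edges_between_cross_le:
  assumes G: "digraph V E" and "S \<subseteq> V" "C \<subseteq> V" "card C = card S"
  shows "card (edges_between E (V - S) C) + card E
           \<le> card V * max_semideg V E + card (edges_between E S (V - C))"
proof -
  have fin: "finite V" "finite E"
    using G digraph_finite_edges unfolding digraph_def by blast+
  have "edges_between E V V = E"
    using G unfolding digraph_def edges_between_def by auto
  then have total: "card E = card (edges_between E S C) + card (edges_between E S (V - C))
                              + card (edges_between E (V - S) V)"
    using card_edges_between_Diff_source[OF fin(2) \<open>S \<subseteq> V\<close>, of V]
      card_edges_between_Diff_target[OF fin(2) \<open>C \<subseteq> V\<close>, of S] by simp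
  have into_C: "card (edges_between E V C) = card (edges_between E S C) + card (edges_between E (V - S) C)"
    by (rule card_edges_between_Diff_source[OF fin(2) \<open>S \<subseteq> V\<close>])
  have "card (edges_between E V C) \<le> card S * max_semideg V E"
    using card_edges_between_le_target[OF G \<open>C \<subseteq> V\<close>] \<open>card C = card S\<close> by simp
  moreover have "card (edges_between E (V - S) V) \<le> (card V - card S) * max_semideg V E"
    using card_edges_between_le_source[OF G, of "V - S"] \<open>S \<subseteq> V\<close> fin(1)
    by (simp add: card_Diff_subset finite_subset)
  moreover have "card S * max_semideg V E + (card V - card S) * max_semideg V E = card V * max_semideg V E"
    using \<open>S \<subseteq> V\<close> fin(1) card_mono by (metis add_mult_distrib le_add_diff_inverse)
  ultimately show ?thesis
    using total into_C by linarith
qed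

lemma obtain_partner_of_non_expanding_set:
  assumes G: "digraph V E" and "S \<subseteq> V" "0 \<le> \<nu>"
    and small: "real (card (robust_outnbhd V E \<nu> S)) < real (card S) + \<nu> * real (card V)"
  obtains C where "C \<subseteq> V" "card C = card S"
    "real (card (edges_between E S (V - C)))
       \<le> \<nu> * real (card V) * (real (card V) + real (max_semideg V E))"
proof -
  define R where "R = robust_outnbhd V E \<nu> S"
  have fin: "finite V"
    using G unfolding digraph_def by blast
  have "R \<subseteq> V"
    unfolding R_def robust_outnbhd_def by auto
  moreover have "card S \<le> card V"
    using \<open>S \<subseteq> V\<close> fin by (simp add: card_mono)
  ultimately obtain C where C: "C \<subseteq> V" "card C = card S" "card (R - C) = card R - card S"
    using obtain_subset_card_nearest[OF fin] by blast
  have "real (card (R - C)) \<le> \<nu> * real (card V)"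
    using C(3) small \<open>0 \<le> \<nu>\<close> unfolding R_def[symmetric]
    by (cases "card R \<le> card S") (auto simp: of_nat_diff)
  then have "real (card (R - C)) * real (max_semideg V E) \<le> \<nu> * real (card V) * real (max_semideg V E)"
    by (rule mult_right_mono) simp
  then have "real (card (edges_between E S (V - C)))
               \<le> \<nu> * real (card V) * (real (card V) + real (max_semideg V E))"
    using card_edges_between_complement_le[OF G \<open>S \<subseteq> V\<close> C(1) \<open>0 \<le> \<nu>\<close>]
    unfolding R_def distrib_left by linarith
  then show ?thesis
    using C(1,2) that by blast
qed

definition cross_partition :: "'a set \<Rightarrow> 'a set \<Rightarrow> 'a set \<Rightarrow> nat \<Rightarrow> nat \<Rightarrow> 'a set" where
  "cross_partition V S C i j = (if i = 1 then S else V - S) \<inter> (if j = 1 then C else V - C)"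

lemma four_partition_cross_partition:
  "S \<subseteq> V \<Longrightarrow> C \<subseteq> V \<Longrightarrow> four_partition V (cross_partition V S C)"
  unfolding four_partition_def cross_partition_def by auto

lemma rows_cols_cross_partition:
  assumes "S \<subseteq> V" "C \<subseteq> V"
  shows "row (cross_partition V S C) 1 = S" "row (cross_partition V S C) 2 = V - S"
    and "col (cross_partition V S C) 1 = C" "col (cross_partition V S C) 2 = V - C"
  using assms unfolding row_def col_def cross_partition_def by auto

lemma four_partition_of_non_robust_outexpander:
  assumes G: "digraph V E" and "\<alpha> \<le> 1/2" "0 \<le> \<nu>"
    and edges: "real (card E) \<ge> (\<alpha> - \<nu>) * real (card V) ^ 2"
    and semideg: "real (max_semideg V E) \<le> \<alpha> * real (card V)"
    and "\<not> robust_outexpander V E \<nu> \<tau>"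
  shows "\<exists>P. four_tau_gamma_partition V E \<tau> (4 * \<nu>) P"
proof -
  define n \<Delta> where "n = real (card V)" and "\<Delta> = real (max_semideg V E)"
  have fin: "finite V"
    using G unfolding digraph_def by blast
  obtain S where S: "S \<subseteq> V" "\<tau> * n \<le> real (card S)" "real (card S) \<le> (1 - \<tau>) * n"
    and small: "real (card (robust_outnbhd V E \<nu> S)) < real (card S) + \<nu> * n"
    using \<open>\<not> robust_outexpander V E \<nu> \<tau>\<close> unfolding robust_outexpander_def n_def by (auto simp: not_le)
  obtain C where C: "C \<subseteq> V" "card C = card S"
    and leaving: "real (card (edges_between E S (V - C))) \<le> \<nu> * n * (n + \<Delta>)"
    using obtain_partner_of_non_expanding_set[OF G S(1) \<open>0 \<le> \<nu>\<close> small[unfolded n_def]]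
    unfolding n_def \<Delta>_def by blast
  have entering: "real (card (edges_between E (V - S) C)) + real (card E)
                    \<le> n * \<Delta> + real (card (edges_between E S (V - C)))"
    using card_edges_between_cross_le[OF G S(1) C(1,2)] unfolding n_def \<Delta>_def
    by (metis of_nat_add of_nat_le_iff of_nat_mult)
  define P where "P = cross_partition V S C"
  note rows_cols = rows_cols_cross_partition[OF S(1) C(1), folded P_def]
  have "real (card (bad_edges E P))
          \<le> real (card (edges_between E S (V - C))) + real (card (edges_between E (V - S) C))"
    unfolding bad_edges_def rows_cols by (metis card_Un_le of_nat_add of_nat_le_iff)
  moreover have "n * \<Delta> \<le> \<alpha> * n ^ 2"
    using mult_left_mono[OF semideg, of n] unfolding n_def \<Delta>_def by (simp add: power2_eq_square algebra_simps)
  moreover have "\<nu> * n * \<Delta> \<le> \<nu> * n ^ 2 / 2"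
  proof -
    have "\<Delta> \<le> n / 2"
      using semideg mult_right_mono[OF \<open>\<alpha> \<le> 1/2\<close>, of n] unfolding n_def \<Delta>_def by simp
    then show ?thesis
      using mult_left_mono[of \<Delta> "n / 2" "\<nu> * n"] \<open>0 \<le> \<nu>\<close> unfolding n_def by (simp add: power2_eq_square)
  qed
  ultimately have bad: "real (card (bad_edges E P)) \<le> 4 * \<nu> * n ^ 2"
    using leaving entering edges unfolding n_def by (simp add: power2_eq_square algebra_simps)
  have "real (card (V - S)) = n - real (card S)" "real (card (V - C)) = n - real (card S)"
    using S(1) C fin unfolding n_def by (simp_all add: card_Diff_subset finite_subset of_nat_diff card_mono)
  then have "\<forall>i\<in>{1,2}. \<tau> * n \<le> real (card (row P i)) \<and> \<tau> * n \<le> real (card (col P i))"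
    using S(2,3) C(2) by (simp add: rows_cols[simplified] algebra_simps)
  then have "four_tau_gamma_partition V E \<tau> (4 * \<nu>) P"
    using four_partition_cross_partition[OF S(1) C(1)] bad
    unfolding four_tau_gamma_partition_def P_def[symmetric] n_def by blast
  then show ?thesis by blast
qed

lemma hier_fun_id: "hier_fun (\<lambda>x. x)"
  unfolding hier_fun_def by (auto simp: mono_on_def)

theorem lemma3p6:
  "\<exists>\<alpha>0 \<in> {0<..1}. \<exists>f\<tau> f\<nu> fn. hier_fun f\<tau> \<and> hier_fun f\<nu> \<and> hier_fun fn \<and>
     (\<forall>(\<alpha>::real) (\<tau>::real) (\<nu>::real) (n::nat) (V::nat set) (E::(nat \<times> nat) set).
        0 < \<alpha> \<and> \<alpha> \<le> \<alpha>0 \<and> 0 < \<tau> \<and> \<tau> \<le> f\<tau> \<alpha> \<and> 0 < \<nu> \<and> \<nu> \<le> f\<nu> \<tau> \<and>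
        0 < n \<and> 1 / real n \<le> fn \<nu> \<and>
        digraph V E \<and> card V = n \<and>
        real (card E) \<ge> (\<alpha> - \<nu>) * real n ^ 2 \<and>
        real (max_semideg V E) \<le> \<alpha> * real n \<and>
        \<not> robust_outexpander V E \<nu> \<tau>
        \<longrightarrow> (\<exists>P. four_tau_gamma_partition V E \<tau> (4 * \<nu>) P))"
proof (intro bexI[of _ "1/2"] exI[of _ "\<lambda>x. x"] conjI hier_fun_id allI impI)
  fix \<alpha> \<tau> \<nu> :: real and n :: nat and V :: "nat set" and E :: "(nat \<times> nat) set"
  assume "0 < \<alpha> \<and> \<alpha> \<le> 1/2 \<and> 0 < \<tau> \<and> \<tau> \<le> \<alpha> \<and> 0 < \<nu> \<and> \<nu> \<le> \<tau> \<and>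
        0 < n \<and> 1 / real n \<le> \<nu> \<and> digraph V E \<and> card V = n \<and>
        real (card E) \<ge> (\<alpha> - \<nu>) * real n ^ 2 \<and>
        real (max_semideg V E) \<le> \<alpha> * real n \<and>
        \<not> robust_outexpander V E \<nu> \<tau>"
  then show "\<exists>P. four_tau_gamma_partition V E \<tau> (4 * \<nu>) P"
    by (intro four_partition_of_non_robust_outexpander[of V E \<alpha>]) auto
qed auto

end
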